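(* Let $m\ge 2$ and let $v_m=\sum_{\sigma\in\mathscr{T}_m}(-1)^{\sigma^{-1}(1)-1}\sigma\in\mathbb{Z}\mathcal{S}_m$. Then $$v_m=\prod_{i=2}^{m}\left(1-(-1)^i\tau_i\right)=(1-\tau_2)(1+\tau_3)(1-\tau_4)\cdots\left(1-(-1)^m\tau_m\right),$$ the product being taken in increasing order of $i$ from left to right.
   Context: $\mathcal{S}_m$ is the group of bijections of $I_m=\{1,\ldots,m\}$, with $\sigma\circ\tau$ meaning apply $\tau$ first, then $\sigma$; $\mathbb{Z}\mathcal{S}_m$ is its integral group ring, with multiplication induced by $\circ$. $\mathscr{T}_m=\{\sigma\in\mathcal{S}_m \mid \exists t\in I_m:\ \sigma(1)>\sigma(2)>\cdots>\sigma(t)=1,\ \sigma(t)<\sigma(t+1)<\cdots<\sigma(m)\}$. For $i\in I_m$, $\tau_i\in\mathcal{S}_m$ is defined by $\tau_i(j)=i+1-j$ for $1\le j\le i$ and $\tau_i(j)=j$ for $j>i$. *)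

theory Defs
  imports "HOL-Combinatorics.Permutations"
begin

text \<open>The symmetric group S_m: bijections of I_m = {1..m}, extended by the identity
  outside I_m. Composition sigma o tau applies tau first.\<close>
definition Sym :: "nat \<Rightarrow> (nat \<Rightarrow> nat) set" where
  "Sym m = {\<sigma>. \<sigma> permutes {1..m}}"

text \<open>Elements of the integral group ring Z S_m are represented as coefficient
  functions (nat => nat) => int supported on Sym m.\<close>
type_synonym grpring = "(nat \<Rightarrow> nat) \<Rightarrow> int"

definition gr_basis :: "nat \<Rightarrow> (nat \<Rightarrow> nat) \<Rightarrow> grpring" where
  "gr_basis m \<sigma> = (\<lambda>\<pi>. if \<pi> = \<sigma> \<and> \<sigma> \<in> Sym m then 1 else 0)"

definition gr_one :: "nat \<Rightarrow> grpring" where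
  "gr_one m = gr_basis m id"

definition gr_add :: "grpring \<Rightarrow> grpring \<Rightarrow> grpring" where
  "gr_add a b = (\<lambda>\<pi>. a \<pi> + b \<pi>)"

definition gr_smult :: "int \<Rightarrow> grpring \<Rightarrow> grpring" where
  "gr_smult c a = (\<lambda>\<pi>. c * a \<pi>)"

definition gr_mult :: "nat \<Rightarrow> grpring \<Rightarrow> grpring \<Rightarrow> grpring" where
  "gr_mult m a b = (\<lambda>\<pi>. \<Sum>\<sigma>\<in>Sym m. \<Sum>\<tau>\<in>Sym m. if \<sigma> \<circ> \<tau> = \<pi> then a \<sigma> * b \<tau> else 0)"

definition Tset :: "nat \<Rightarrow> (nat \<Rightarrow> nat) set" where
  "Tset m = {\<sigma> \<in> Sym m. \<exists>t\<in>{1..m}.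
      (\<forall>j. 1 \<le> j \<and> j < t \<longrightarrow> \<sigma> j > \<sigma> (j + 1)) \<and> \<sigma> t = 1 \<and>
      (\<forall>j. t \<le> j \<and> j < m \<longrightarrow> \<sigma> j < \<sigma> (j + 1))}"

definition tau :: "nat \<Rightarrow> nat \<Rightarrow> nat" where
  "tau i = (\<lambda>j. if 1 \<le> j \<and> j \<le> i then i + 1 - j else j)"

definition v_elem :: "nat \<Rightarrow> grpring" where
  "v_elem m = (\<lambda>\<pi>. if \<pi> \<in> Tset m then (-1) ^ (inv \<pi> 1 - 1) else 0)"

definition factor :: "nat \<Rightarrow> nat \<Rightarrow> grpring" where
  "factor m i = gr_add (gr_one m) (gr_smult (- ((-1) ^ i)) (gr_basis m (tau i)))"

definition prod_factors :: "nat \<Rightarrow> grpring" where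
  "prod_factors m = foldl (gr_mult m) (gr_one m) (map (factor m) [2..<m+1])"

end

theory Submission
  imports Defs
begin

text \<open>
  A permutation in \<open>\<T>\<^sub>m\<^sub>+\<^sub>1\<close> takes its maximum \<open>m + 1\<close> at position \<open>1\<close> or \<open>m + 1\<close>.
  If \<open>\<pi>(m + 1) = m + 1\<close> then \<open>\<pi> \<in> \<T>\<^sub>m\<close>; otherwise \<open>\<pi> \<circ> \<tau>\<^sub>m\<^sub>+\<^sub>1\<close> reverses the sequence,
  lies in \<open>\<T>\<^sub>m\<close>, and moves the position \<open>t\<close> of \<open>1\<close> to \<open>m + 2 - t\<close>. Hence the coefficients
  satisfy \<open>v\<^sub>m\<^sub>+\<^sub>1(\<pi>) = v\<^sub>m(\<pi>) + (-1)\<^sup>m v\<^sub>m(\<pi> \<circ> \<tau>\<^sub>m\<^sub>+\<^sub>1)\<close>, which is exactly the effect of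
  right multiplication by \<open>1 - (-1)\<^sup>m\<^sup>+\<^sup>1 \<tau>\<^sub>m\<^sub>+\<^sub>1\<close>. Induction from \<open>v\<^sub>1 = 1\<close> gives the product.
\<close>

definition gr_supported :: "nat \<Rightarrow> grpring \<Rightarrow> bool" where
  "gr_supported m a \<longleftrightarrow> (\<forall>\<pi>. \<pi> \<notin> Sym m \<longrightarrow> a \<pi> = 0)"

definition gr_unit :: grpring where
  "gr_unit = (\<lambda>\<pi>. if \<pi> = id then 1 else 0)"

text \<open>The coefficient function of \<open>a (1 - (-1)\<^sup>i \<tau>\<^sub>i)\<close>, independent of the ambient \<open>m\<close>.\<close>
definition times_factor :: "nat \<Rightarrow> grpring \<Rightarrow> grpring" where
  "times_factor i a = (\<lambda>\<pi>. a \<pi> - (-1) ^ i * a (\<pi> \<circ> tau i))"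

lemma finite_Sym: "finite (Sym m)"
  unfolding Sym_def using finite_permutations[of "{1..m}"] by simp

lemma id_in_Sym: "id \<in> Sym m"
  unfolding Sym_def by simp

lemma comp_in_Sym: "\<sigma> \<in> Sym m \<Longrightarrow> \<tau> \<in> Sym m \<Longrightarrow> \<sigma> \<circ> \<tau> \<in> Sym m"
  unfolding Sym_def by (simp add: permutes_compose)

lemma gr_one_eq_gr_unit: "gr_one m = gr_unit"
  unfolding gr_one_def gr_basis_def gr_unit_def using id_in_Sym by auto

lemma gr_supported_gr_unit: "gr_supported m gr_unit"
  unfolding gr_supported_def gr_unit_def using id_in_Sym by auto

lemma gr_mult_gr_add_right:
  "gr_mult m a (gr_add b c) = gr_add (gr_mult m a b) (gr_mult m a c)"
  unfolding gr_mult_def gr_add_def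
  by (simp add: distrib_left if_distrib[of "\<lambda>x. x + _"] sum.distrib[symmetric] cong: if_cong)

lemma gr_mult_gr_smult_right: "gr_mult m a (gr_smult c b) = gr_smult c (gr_mult m a b)"
  unfolding gr_mult_def gr_smult_def
  by (simp add: sum_distrib_left if_distrib[of "(*) c"] mult.left_commute cong: if_cong)

lemma gr_mult_basis_right:
  assumes "gr_supported m a" "g \<in> Sym m"
  shows "gr_mult m a (gr_basis m g) = (\<lambda>\<pi>. a (\<pi> \<circ> inv g))"
proof
  fix \<pi>
  have "bij g" using assms(2) by (simp add: Sym_def permutes_bij)
  then have comp_eq: "\<sigma> \<circ> g = \<pi> \<longleftrightarrow> \<sigma> = \<pi> \<circ> inv g" for \<sigma> :: "nat \<Rightarrow> nat"
    by (metis bij_is_inj bij_is_surj comp_assoc comp_id inv_o_cancel surj_iff)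
  have "gr_mult m a (gr_basis m g) \<pi> =
      (\<Sum>\<sigma>\<in>Sym m. \<Sum>\<tau>\<in>Sym m. if \<tau> = g then (if \<sigma> \<circ> g = \<pi> then a \<sigma> else 0) else 0)"
    unfolding gr_mult_def gr_basis_def using assms(2) by (intro sum.cong refl) auto
  also have "\<dots> = (\<Sum>\<sigma>\<in>Sym m. if \<sigma> = \<pi> \<circ> inv g then a \<sigma> else 0)"
    using assms(2) finite_Sym by (simp add: comp_eq)
  also have "\<dots> = a (\<pi> \<circ> inv g)"
    using finite_Sym assms(1) unfolding gr_supported_def by auto
  finally show "gr_mult m a (gr_basis m g) \<pi> = a (\<pi> \<circ> inv g)" .
qed

lemma tau_tau [simp]: "tau i (tau i j) = j"
  unfolding tau_def by auto

lemma tau_comp_tau [simp]: "\<pi> \<circ> tau i \<circ> tau i = \<pi>"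
  by (simp add: fun_eq_iff)

lemma tau_permutes: "tau i permutes {1..i}"
  unfolding permutes_def by (metis atLeastAtMost_iff tau_def tau_tau)

lemma inv_tau: "inv (tau i) = tau i"
  by (rule inv_unique_comp) (auto simp: fun_eq_iff)

lemma tau_in_Sym: "i \<le> m \<Longrightarrow> tau i \<in> Sym m"
  unfolding Sym_def using permutes_subset[OF tau_permutes] by simp

lemma gr_mult_factor:
  assumes "gr_supported m a" "i \<le> m"
  shows "gr_mult m a (factor m i) = times_factor i a"
  using gr_mult_basis_right[OF assms(1) id_in_Sym] gr_mult_basis_right[OF assms(1) tau_in_Sym[OF assms(2)]]
  unfolding factor_def gr_mult_gr_add_right gr_mult_gr_smult_right gr_one_def
  by (simp add: times_factor_def gr_add_def gr_smult_def inv_tau)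

lemma gr_supported_times_factor:
  assumes "gr_supported m a" "i \<le> m"
  shows "gr_supported m (times_factor i a)"
  unfolding gr_supported_def times_factor_def
proof (intro allI impI)
  fix \<pi> assume \<pi>: "\<pi> \<notin> Sym m"
  have "\<pi> \<circ> tau i \<notin> Sym m"
    using comp_in_Sym[OF _ tau_in_Sym[OF assms(2)], of "\<pi> \<circ> tau i"] \<pi> by auto
  then show "a \<pi> - (-1) ^ i * a (\<pi> \<circ> tau i) = 0"
    using \<pi> assms(1) unfolding gr_supported_def by simp
qed

lemma foldl_gr_mult_factor:
  "gr_supported m a \<Longrightarrow> set is \<subseteq> {..m} \<Longrightarrow>
   foldl (gr_mult m) a (map (factor m) is) = foldl (\<lambda>a i. times_factor i a) a is"
proof (induction "is" arbitrary: a)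
  case (Cons i "is")
  then show ?case by (simp add: gr_mult_factor gr_supported_times_factor)
qed simp

lemma prod_factors_eq_foldl: "prod_factors m = foldl (\<lambda>a i. times_factor i a) gr_unit [2..<m+1]"
  unfolding prod_factors_def gr_one_eq_gr_unit
  by (rule foldl_gr_mult_factor[OF gr_supported_gr_unit]) auto

lemma TsetE:
  assumes "\<sigma> \<in> Tset n"
  obtains t where "t \<in> {1..n}" "\<sigma> t = 1" "inv \<sigma> 1 = t" "\<sigma> permutes {1..n}"
    "\<And>j. 1 \<le> j \<Longrightarrow> j < t \<Longrightarrow> \<sigma> j > \<sigma> (j + 1)"
    "\<And>j. t \<le> j \<Longrightarrow> j < n \<Longrightarrow> \<sigma> j < \<sigma> (j + 1)"
proof -
  from assms obtain t where t: "t \<in> {1..n}" "\<sigma> t = 1" "\<sigma> permutes {1..n}"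
      "\<forall>j. 1 \<le> j \<and> j < t \<longrightarrow> \<sigma> j > \<sigma> (j + 1)"
      "\<forall>j. t \<le> j \<and> j < n \<longrightarrow> \<sigma> j < \<sigma> (j + 1)"
    unfolding Tset_def Sym_def by blast
  moreover have "inv \<sigma> 1 = t" using permutes_inv_eq[OF t(3)] t(2) by simp
  ultimately show ?thesis using that by blast
qed

lemma TsetI:
  assumes "\<sigma> permutes {1..n}" "t \<in> {1..n}" "\<sigma> t = 1"
    "\<And>j. 1 \<le> j \<Longrightarrow> j < t \<Longrightarrow> \<sigma> j > \<sigma> (j + 1)"
    "\<And>j. t \<le> j \<Longrightarrow> j < n \<Longrightarrow> \<sigma> j < \<sigma> (j + 1)"
  shows "\<sigma> \<in> Tset n"
  unfolding Tset_def Sym_def using assms by blast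

lemma Tset_permutes: "\<sigma> \<in> Tset n \<Longrightarrow> \<sigma> permutes {1..n}"
  unfolding Tset_def Sym_def by simp

lemma Tset_one: "Tset 1 = {id}"
proof -
  have "Tset 1 \<subseteq> {id}" unfolding Tset_def Sym_def by auto
  moreover have "id \<in> Tset 1" by (rule TsetI[of _ 1 1]) auto
  ultimately show ?thesis by blast
qed

lemma Tset_imp_Tset_Suc:
  assumes "\<sigma> \<in> Tset m"
  shows "\<sigma> \<in> Tset (Suc m)"
proof -
  obtain t where t: "t \<in> {1..m}" "\<sigma> t = 1" "\<sigma> permutes {1..m}"
    "\<And>j. 1 \<le> j \<Longrightarrow> j < t \<Longrightarrow> \<sigma> j > \<sigma> (j + 1)"
    "\<And>j. t \<le> j \<Longrightarrow> j < m \<Longrightarrow> \<sigma> j < \<sigma> (j + 1)"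
    using TsetE[OF assms] by metis
  have last: "\<sigma> m < \<sigma> (Suc m)"
    using t(1) permutes_in_image[OF t(3), of m] permutes_not_in[OF t(3), of "Suc m"] by simp
  show ?thesis
  proof (rule TsetI[of _ _ t])
    show "\<sigma> permutes {1..Suc m}" using permutes_subset[OF t(3)] by simp
    show "\<And>j. t \<le> j \<Longrightarrow> j < Suc m \<Longrightarrow> \<sigma> j < \<sigma> (j + 1)"
      using t(5) last by (metis Suc_eq_plus1 less_Suc_eq)
  qed (use t in auto)
qed

lemma Tset_Suc_imp_Tset:
  assumes "\<pi> \<in> Tset (Suc m)" "\<pi> (Suc m) = Suc m" "m \<ge> 1"
  shows "\<pi> \<in> Tset m"
proof -
  obtain t where t: "t \<in> {1..Suc m}" "\<pi> t = 1" "\<pi> permutes {1..Suc m}"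
    "\<And>j. 1 \<le> j \<Longrightarrow> j < t \<Longrightarrow> \<pi> j > \<pi> (j + 1)"
    "\<And>j. t \<le> j \<Longrightarrow> j < Suc m \<Longrightarrow> \<pi> j < \<pi> (j + 1)"
    using TsetE[OF assms(1)] by metis
  have "\<pi> permutes {1..m}"
    by (rule permutes_superset[OF t(3)]) (use assms(2) in \<open>auto simp: le_Suc_eq\<close>)
  moreover have "t \<in> {1..m}" using t(1,2) assms(2,3) by (auto simp: le_Suc_eq)
  ultimately show ?thesis
    by (rule TsetI) (use t in simp_all)
qed

text \<open>Right composition with \<open>\<tau>\<^sub>n\<close> reverses the sequence \<open>\<sigma>(1), \<dots>, \<sigma>(n)\<close>.\<close>
lemma Tset_comp_tau:
  assumes "\<sigma> \<in> Tset n"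
  shows "\<sigma> \<circ> tau n \<in> Tset n"
proof -
  obtain t where t: "t \<in> {1..n}" "\<sigma> t = 1" "\<sigma> permutes {1..n}"
    "\<And>j. 1 \<le> j \<Longrightarrow> j < t \<Longrightarrow> \<sigma> j > \<sigma> (j + 1)"
    "\<And>j. t \<le> j \<Longrightarrow> j < n \<Longrightarrow> \<sigma> j < \<sigma> (j + 1)"
    using TsetE[OF assms] by metis
  have tau_eq: "1 \<le> j \<Longrightarrow> j \<le> n \<Longrightarrow> tau n j = n + 1 - j" for j
    unfolding tau_def by auto
  show ?thesis
  proof (rule TsetI[of _ _ "n + 1 - t"])
    show "\<sigma> \<circ> tau n permutes {1..n}" using permutes_compose[OF tau_permutes t(3)] .
    show "n + 1 - t \<in> {1..n}" "(\<sigma> \<circ> tau n) (n + 1 - t) = 1"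
      using t(1,2) tau_eq[of "n + 1 - t"] by auto
  next
    fix j assume j: "1 \<le> j" "j < n + 1 - t"
    then have "\<sigma> (n - j) < \<sigma> (n - j + 1)" "n - j + 1 = n + 1 - j"
      using t(4,5)[of "n - j"] t(1) by auto
    then show "(\<sigma> \<circ> tau n) j > (\<sigma> \<circ> tau n) (j + 1)"
      using j t(1) tau_eq[of j] tau_eq[of "j + 1"] by auto
  next
    fix j assume j: "n + 1 - t \<le> j" "j < n"
    then have "\<sigma> (n - j) > \<sigma> (n - j + 1)" "n - j + 1 = n + 1 - j"
      using t(4)[of "n - j"] t(1) by auto
    then show "(\<sigma> \<circ> tau n) j < (\<sigma> \<circ> tau n) (j + 1)"
      using j t(1) tau_eq[of j] tau_eq[of "j + 1"] by auto
  qed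
qed

lemma inv_comp_tau_one:
  assumes "\<sigma> permutes {1..n}" "t \<in> {1..n}" "\<sigma> t = 1"
  shows "inv (\<sigma> \<circ> tau n) 1 = n + 1 - t"
proof -
  have "(\<sigma> \<circ> tau n) (n + 1 - t) = 1" using assms(2,3) by (auto simp: tau_def)
  then show ?thesis
    using permutes_inv_eq[OF permutes_compose[OF tau_permutes assms(1)]] by simp
qed

lemma Tset_max_at_ends:
  assumes "\<pi> \<in> Tset n"
  shows "\<pi> 1 = n \<or> \<pi> n = n"
proof -
  obtain t where t: "t \<in> {1..n}" "\<pi> t = 1" "\<pi> permutes {1..n}"
    "\<And>j. 1 \<le> j \<Longrightarrow> j < t \<Longrightarrow> \<pi> j > \<pi> (j + 1)"
    "\<And>j. t \<le> j \<Longrightarrow> j < n \<Longrightarrow> \<pi> j < \<pi> (j + 1)"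
    using TsetE[OF assms] by metis
  define k where "k = inv \<pi> n"
  have \<pi>k: "\<pi> k = n" unfolding k_def using permutes_inverses(1)[OF t(3)] by simp
  have k: "k \<in> {1..n}" using \<pi>k permutes_in_image[OF t(3), of k] t(1) by auto
  have bound: "x \<in> {1..n} \<Longrightarrow> \<pi> x \<le> n" for x
    using permutes_in_image[OF t(3)] by auto
  have "\<not> (1 < k \<and> k < n)"
  proof
    assume k_inner: "1 < k \<and> k < n"
    consider "k < t" | "k = t" | "t < k" by linarith
    then show False
    proof cases
      case 1
      then have "1 \<le> k - 1" "k - 1 < t" using k_inner by auto
      from t(4)[OF this] have "\<pi> (k - 1) > \<pi> k" using k_inner by simp
      moreover have "\<pi> (k - 1) \<le> n" by (rule bound) (use k_inner in auto)
      ultimately show False using \<pi>k by simp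
    next
      case 2
      then show False using \<pi>k t(2) k_inner by simp
    next
      case 3
      then have "\<pi> k < \<pi> (k + 1)" using t(5)[of k] k_inner by simp
      then show False using bound[of "k + 1"] k_inner \<pi>k by simp
    qed
  qed
  then have "k = 1 \<or> k = n" using k by auto
  then show ?thesis using \<pi>k by auto
qed

lemma v_elem_Suc:
  assumes m: "m \<ge> 1"
  shows "v_elem (Suc m) \<pi> = v_elem m \<pi> + (-1) ^ m * v_elem m (\<pi> \<circ> tau (Suc m))"
proof -
  let ?\<rho> = "\<pi> \<circ> tau (Suc m)"
  have tau_ends: "tau (Suc m) (Suc m) = 1" "tau (Suc m) 1 = Suc m" unfolding tau_def by auto
  have fixes_Suc: "\<sigma> \<in> Tset m \<Longrightarrow> \<sigma> (Suc m) = Suc m" for \<sigma>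
    using permutes_not_in[OF Tset_permutes] by simp
  have below_Suc: "\<sigma> \<in> Tset m \<Longrightarrow> \<sigma> 1 \<noteq> Suc m" for \<sigma>
    using permutes_in_image[OF Tset_permutes, of \<sigma> m 1] m by auto
  consider (fixed) "\<pi> \<in> Tset m" | (reversed) "?\<rho> \<in> Tset m" | (neither) "\<pi> \<notin> Tset m" "?\<rho> \<notin> Tset m"
    by blast
  then show ?thesis
  proof cases
    case fixed
    then have "?\<rho> \<notin> Tset m" using fixes_Suc[of ?\<rho>] below_Suc[of \<pi>] tau_ends by auto
    with fixed show ?thesis using Tset_imp_Tset_Suc unfolding v_elem_def by simp
  next
    case reversed
    have "\<pi> \<notin> Tset m" using fixes_Suc[OF reversed] below_Suc[of \<pi>] tau_ends by auto
    obtain t where t: "t \<in> {1..m}" "inv ?\<rho> 1 = t" "?\<rho> t = 1" "?\<rho> permutes {1..m}"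
      using TsetE[OF reversed] by metis
    have \<rho>_comp_tau: "?\<rho> \<circ> tau (Suc m) = \<pi>" by simp
    have "?\<rho> permutes {1..Suc m}" using permutes_subset[OF t(4)] by simp
    from inv_comp_tau_one[OF this, of t] have "inv \<pi> 1 = Suc m + 1 - t"
      using t(1,3) unfolding \<rho>_comp_tau by simp
    moreover have "\<pi> \<in> Tset (Suc m)"
      using Tset_comp_tau[OF Tset_imp_Tset_Suc[OF reversed]] unfolding \<rho>_comp_tau .
    moreover have "(-1::int) ^ (m + 1 - t) = (-1) ^ m * (-1) ^ (t - 1)"
      using t(1) by (simp add: power_add[symmetric] power_diff_conv_inverse minus_one_power_iff)
    ultimately show ?thesis using \<open>\<pi> \<notin> Tset m\<close> reversed t(1,2) unfolding v_elem_def by simp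
  next
    case neither
    have "\<pi> \<notin> Tset (Suc m)"
    proof
      assume \<pi>: "\<pi> \<in> Tset (Suc m)"
      from Tset_max_at_ends[OF \<pi>] show False
      proof
        assume "\<pi> 1 = Suc m"
        then show False
          using Tset_Suc_imp_Tset[OF Tset_comp_tau[OF \<pi>] _ m] neither tau_ends by simp
      qed (use Tset_Suc_imp_Tset[OF \<pi> _ m] neither in simp)
    qed
    with neither show ?thesis unfolding v_elem_def by simp
  qed
qed

lemma v_elem_eq_foldl:
  "m \<ge> 1 \<Longrightarrow> v_elem m = foldl (\<lambda>a i. times_factor i a) gr_unit [2..<m+1]"
proof (induction m rule: dec_induct)
  case base
  show ?case unfolding v_elem_def gr_unit_def Tset_one by auto
next
  case (step m)
  have "foldl (\<lambda>a i. times_factor i a) gr_unit [2..<Suc m + 1] = times_factor (Suc m) (v_elem m)"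
    using step by simp
  also have "\<dots> = v_elem (Suc m)"
    unfolding times_factor_def using v_elem_Suc[OF step(1)] by (auto simp: fun_eq_iff)
  finally show ?case by simp
qed

theorem mainTheorem8:
  fixes m :: nat
  assumes "m \<ge> 2"
  shows "v_elem m = prod_factors m"
  using v_elem_eq_foldl[of m] assms prod_factors_eq_foldl by simp

end
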